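(* In the setting described in the context, define $$Z_0=\big\|\boldsymbol{\Pi}^{\le 2N}-\boldsymbol{\Pi}^{\le 3N}B\big(I+Dg^N(\overline{\mathbf{U}})l^{-1}\big)\boldsymbol{\Pi}^{\le 2N}\big\|_2,$$ $$Z_{1,1}=\Big(\tfrac{\mathscr{l}_{22}}{\mathscr{l}_{den}}\Big)_{2N}\|V_1^N\|_1+\Big(\tfrac{\mathscr{l}_{21}}{\mathscr{l}_{den}}\Big)_{2N}\|V_2^N\|_1,\qquad Z_{1,2}=\Big(\tfrac{\mathscr{l}_{12}}{\mathscr{l}_{den}}\Big)_{2N}\|V_1^N\|_1+\Big(\tfrac{\mathscr{l}_{11}}{\mathscr{l}_{den}}\Big)_{2N}\|V_2^N\|_1,$$ where $\big(\tfrac{\mathscr{l}_{ij}}{\mathscr{l}_{den}}\big)_{2N}=\sup_{n\in\mathbb{N}_0,\,n>2N}\big|\tfrac{\mathscr{l}_{ij}(\tilde n)}{\mathscr{l}_{den}(\tilde n)}\big|$, and let $Z_1=\sqrt{Z_0^2+2Z_{1,1}^2+2Z_{1,2}^2}$. Then $$\big\|I-B\big(I+Dg^N(\overline{\mathbf{U}})l^{-1}\big)\big\|_2\le Z_1.$$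
   Context: Parameters: $\nu>0$, $\nu_1,\dots,\nu_5\in\mathbb{R}$; $\mathscr{l}(\xi)=\begin{bmatrix}\mathscr{l}_{11}(\xi)&\mathscr{l}_{12}(\xi)\\ \mathscr{l}_{21}(\xi)&\mathscr{l}_{22}(\xi)\end{bmatrix}=\begin{bmatrix}-\nu|2\pi\xi|^2+\nu_1&\nu_2\\ \nu_3&-|2\pi\xi|^2-\nu_2\end{bmatrix}$ is assumed invertible for every $\xi\in\mathbb{R}$, and $\mathscr{l}_{den}(\xi)=\det\mathscr{l}(\xi)$. Periodic setting: $d\ge1$, $\Omega_0=(-d,d)$, $|\Omega_0|=2d$, $\tilde n=n/(2d)$, $\mathbb{N}_0=\{0,1,\dots\}$, $\alpha_0=1$, $\alpha_n=2$ ($n\ge1$); $\ell^p(\mathbb{N}_0)$ has norm $\|U\|_p=(\sum_n\alpha_n|u_n|^p)^{1/p}$; $\ell^2_e=\ell^2(\mathbb{N}_0)^2$ with $\|\mathbf{U}\|_2=(\|U_1\|_2^2+\|U_2\|_2^2)^{1/2}$, and $\|\cdot\|_2$ of an operator on $\ell^2_e$ is the induced operator norm. $\gamma(u)_n=\frac1{|\Omega_0|}\int_{\Omega_0}u(x)e^{-2\pi i\tilde nx}dx$ for even $u\in L^2(\mathbb{R})$, $\gamma^\dagger(U)(x)=\mathbb{1}_{\Omega_0}(x)\sum_n\alpha_nu_n\cos(2\pi\tilde nx)$; bold versions act componentwise on pairs. $U*V=\gamma(\gamma^\dagger(U)\gamma^\dagger(V))$. $\Pi^{\le M}$ keeps coefficients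 with $n\le M$ and zeroes the others, $\Pi^{>M}=I-\Pi^{\le M}$, bold versions componentwise. $l$ acts on $\ell^2_e$ by $(l\mathbf{U})_n=\mathscr{l}(\tilde n)\mathbf{u}_n$ with $\mathbf{u}_n=((U_1)_n,(U_2)_n)$. Approximate objects: $N_0,N\in\mathbb{N}$; $\overline{\mathbf{U}}\in\ell^2_e$ with $\overline{\mathbf{U}}=\boldsymbol{\Pi}^{\le N_0}\overline{\mathbf{U}}$, $\overline{\mathbf{u}}=(\overline u_1,\overline u_2)=\boldsymbol{\gamma}^\dagger(\overline{\mathbf{U}})$. $B^N$ is a bounded operator on $\ell^2_e$ with $B^N=\boldsymbol{\Pi}^{\le N}B^N\boldsymbol{\Pi}^{\le N}$ and $B=\boldsymbol{\Pi}^{>N}+B^N$. Let $v_1=2\overline u_1\overline u_2+2\nu_4\overline u_1+\nu_5\overline u_2$, $v_2=\overline u_1^2+\nu_5\overline u_1$, $V_i^N=\Pi^{\le N}\gamma(v_i)$, $\mathbb{V}_i^N:W\mapsto V_i^N*W$, and $Dg^N(\overline{\mathbf{U}})=\begin{bmatrix}\mathbb{V}_1^N&\mathbb{V}_2^N\\-\mathbb{V}_1^N&-\mathbb{V}_2^N\end{bmatrix}$. *)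

theory Defs
  imports "HOL-Analysis.Analysis"
begin

type_synonym seq = "nat \<Rightarrow> complex"
type_synonym seqpair = "seq \<times> seq"

definition alpha :: "nat \<Rightarrow> real" where
  "alpha n = (if n = 0 then 1 else 2)"

definition l1norm :: "seq \<Rightarrow> real" where
  "l1norm U = (\<Sum>n. alpha n * cmod (U n))"

definition l2norm :: "seq \<Rightarrow> real" where
  "l2norm U = sqrt (\<Sum>n. alpha n * (cmod (U n))\<^sup>2)"

definition l2 :: "seq set" where
  "l2 = {U. summable (\<lambda>n. alpha n * (cmod (U n))\<^sup>2)}"

definition l2e :: "seqpair set" where
  "l2e = {UU. fst UU \<in> l2 \<and> snd UU \<in> l2}"

definition l2e_norm :: "seqpair \<Rightarrow> real" where
  "l2e_norm UU = sqrt ((l2norm (fst UU))\<^sup>2 + (l2norm (snd UU))\<^sup>2)"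

definition opnorm :: "(seqpair \<Rightarrow> seqpair) \<Rightarrow> real" where
  "opnorm T = Sup {l2e_norm (T UU) | UU. UU \<in> l2e \<and> l2e_norm UU \<le> 1}"

definition Pi_le :: "nat \<Rightarrow> seq \<Rightarrow> seq" where
  "Pi_le M U = (\<lambda>n. if n \<le> M then U n else 0)"

definition Pi_gt :: "nat \<Rightarrow> seq \<Rightarrow> seq" where
  "Pi_gt M U = (\<lambda>n. if n \<le> M then 0 else U n)"

definition PPi_le :: "nat \<Rightarrow> seqpair \<Rightarrow> seqpair" where
  "PPi_le M UU = (Pi_le M (fst UU), Pi_le M (snd UU))"

definition PPi_gt :: "nat \<Rightarrow> seqpair \<Rightarrow> seqpair" where
  "PPi_gt M UU = (Pi_gt M (fst UU), Pi_gt M (snd UU))"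

definition ntilde :: "real \<Rightarrow> nat \<Rightarrow> real" where
  "ntilde d n = real n / (2 * d)"

definition gamma :: "real \<Rightarrow> (real \<Rightarrow> complex) \<Rightarrow> seq" where
  "gamma d u = (\<lambda>n. complex_of_real (1 / (2 * d)) *
      integral {-d..d} (\<lambda>x. u x * exp (- 2 * complex_of_real pi * \<i> * complex_of_real (ntilde d n * x))))"

definition gamma_dag :: "real \<Rightarrow> seq \<Rightarrow> real \<Rightarrow> complex" where
  "gamma_dag d U x = (if x \<in> {-d<..<d}
      then (\<Sum>n. complex_of_real (alpha n) * U n * complex_of_real (cos (2 * pi * ntilde d n * x)))
      else 0)"

text \<open>Discrete convolution U * V = gamma (gamma_dag U * gamma_dag V), written as the
  coefficient formula (U*V)_n = sum over k in Z of u_|k| v_|n-k|.\<close>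
definition conv :: "seq \<Rightarrow> seq \<Rightarrow> seq" where
  "conv U V = (\<lambda>n. infsum (\<lambda>k::int. U (nat \<bar>k\<bar>) * V (nat \<bar>int n - k\<bar>)) UNIV)"

definition l11 :: "real \<Rightarrow> real \<Rightarrow> real \<Rightarrow> real" where
  "l11 \<nu> \<nu>1 \<xi> = - \<nu> * (2 * pi * \<bar>\<xi>\<bar>)\<^sup>2 + \<nu>1"
definition l12 :: "real \<Rightarrow> real \<Rightarrow> real" where
  "l12 \<nu>2 \<xi> = \<nu>2"
definition l21 :: "real \<Rightarrow> real \<Rightarrow> real" where
  "l21 \<nu>3 \<xi> = \<nu>3"
definition l22 :: "real \<Rightarrow> real \<Rightarrow> real" where
  "l22 \<nu>2 \<xi> = - (2 * pi * \<bar>\<xi>\<bar>)\<^sup>2 - \<nu>2"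
definition lden :: "real \<Rightarrow> real \<Rightarrow> real \<Rightarrow> real \<Rightarrow> real \<Rightarrow> real" where
  "lden \<nu> \<nu>1 \<nu>2 \<nu>3 \<xi> = l11 \<nu> \<nu>1 \<xi> * l22 \<nu>2 \<xi> - l12 \<nu>2 \<xi> * l21 \<nu>3 \<xi>"

text \<open>Action of l^{-1} on l2e: (l^{-1} U)_n = l(ntilde n)^{-1} u_n, with the 2x2 inverse
  written via the adjugate.\<close>
definition linv :: "real \<Rightarrow> real \<Rightarrow> real \<Rightarrow> real \<Rightarrow> real \<Rightarrow> seqpair \<Rightarrow> seqpair" where
  "linv d \<nu> \<nu>1 \<nu>2 \<nu>3 UU =
     ((\<lambda>n. let \<xi> = ntilde d n; D = lden \<nu> \<nu>1 \<nu>2 \<nu>3 \<xi> in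
             complex_of_real (l22 \<nu>2 \<xi> / D) * fst UU n - complex_of_real (l12 \<nu>2 \<xi> / D) * snd UU n),
      (\<lambda>n. let \<xi> = ntilde d n; D = lden \<nu> \<nu>1 \<nu>2 \<nu>3 \<xi> in
             - complex_of_real (l21 \<nu>3 \<xi> / D) * fst UU n + complex_of_real (l11 \<nu> \<nu>1 \<xi> / D) * snd UU n))"

definition supgt :: "real \<Rightarrow> nat \<Rightarrow> (real \<Rightarrow> real) \<Rightarrow> real" where
  "supgt d M f = Sup {\<bar>f (ntilde d n)\<bar> | n. n > M}"

definition padd :: "seqpair \<Rightarrow> seqpair \<Rightarrow> seqpair" where
  "padd UU VV = ((\<lambda>n. fst UU n + fst VV n), (\<lambda>n. snd UU n + snd VV n))"
definition pdiff :: "seqpair \<Rightarrow> seqpair \<Rightarrow> seqpair" where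
  "pdiff UU VV = ((\<lambda>n. fst UU n - fst VV n), (\<lambda>n. snd UU n - snd VV n))"

definition psmult :: "complex \<Rightarrow> seqpair \<Rightarrow> seqpair" where
  "psmult c UU = ((\<lambda>n. c * fst UU n), (\<lambda>n. c * snd UU n))"

definition DgN :: "seq \<Rightarrow> seq \<Rightarrow> seqpair \<Rightarrow> seqpair" where
  "DgN V1 V2 WW = ((\<lambda>n. conv V1 (fst WW) n + conv V2 (snd WW) n),
                   (\<lambda>n. - conv V1 (fst WW) n - conv V2 (snd WW) n))"

definition Bop :: "nat \<Rightarrow> (seqpair \<Rightarrow> seqpair) \<Rightarrow> seqpair \<Rightarrow> seqpair" where
  "Bop N BN UU = padd (PPi_gt N UU) (BN UU)"

definition vfun1 :: "real \<Rightarrow> real \<Rightarrow> real \<Rightarrow> seqpair \<Rightarrow> real \<Rightarrow> complex" where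
  "vfun1 d \<nu>4 \<nu>5 Ubar x =
     (let u1 = gamma_dag d (fst Ubar) x; u2 = gamma_dag d (snd Ubar) x in
      2 * u1 * u2 + 2 * complex_of_real \<nu>4 * u1 + complex_of_real \<nu>5 * u2)"

definition vfun2 :: "real \<Rightarrow> real \<Rightarrow> seqpair \<Rightarrow> real \<Rightarrow> complex" where
  "vfun2 d \<nu>5 Ubar x =
     (let u1 = gamma_dag d (fst Ubar) x in u1\<^sup>2 + complex_of_real \<nu>5 * u1)"

definition VN1 :: "real \<Rightarrow> nat \<Rightarrow> real \<Rightarrow> real \<Rightarrow> seqpair \<Rightarrow> seq" where
  "VN1 d N \<nu>4 \<nu>5 Ubar = Pi_le N (gamma d (vfun1 d \<nu>4 \<nu>5 Ubar))"

definition VN2 :: "real \<Rightarrow> nat \<Rightarrow> real \<Rightarrow> seqpair \<Rightarrow> seq" where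
  "VN2 d N \<nu>5 Ubar = Pi_le N (gamma d (vfun2 d \<nu>5 Ubar))"

definition Aop :: "real \<Rightarrow> real \<Rightarrow> real \<Rightarrow> real \<Rightarrow> real \<Rightarrow> seq \<Rightarrow> seq \<Rightarrow> seqpair \<Rightarrow> seqpair" where
  "Aop d \<nu> \<nu>1 \<nu>2 \<nu>3 V1 V2 UU = padd UU (DgN V1 V2 (linv d \<nu> \<nu>1 \<nu>2 \<nu>3 UU))"

end

theory Submission
  imports Defs "HOL-Library.Function_Algebras" "HOL-Real_Asymp.Real_Asymp"
begin

(* Split U into its modes H (n <= 2N) and T (n > 2N). Since V_1^N and V_2^N have modes at most N
   and l^{-1} acts diagonally, D = Dg^N l^{-1} T has no modes n <= N, so B acts as the identity on
   A T = T + D and (I - B A) U = [H - Pi^{<=3N} B A H] - D. The bracket has norm at most Z0 |H|.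
   By Young's inequality |V * W|_2 <= |V|_1 |W|_2 and the tail bounds of the entries of l^{-1},
   |D| <= sqrt 2 (Z11 |T_1| + Z12 |T_2|). Cauchy-Schwarz together with
   |H|^2 + |T_1|^2 + |T_2|^2 = |U|^2 gives the bound Z1. *)

section \<open>Weighted square-summable sequences\<close>

lemma alpha_pos: "0 < alpha n"
  by (simp add: alpha_def)

text \<open>Membership in l2 and all norm estimates below are reduced to uniform bounds on these
  finite partial norms (l2_if_l2norm_upto_bounded), which avoids passing to limits.\<close>

definition l2norm_upto :: "nat \<Rightarrow> seq \<Rightarrow> real" where
  "l2norm_upto M U = L2_set (\<lambda>n. sqrt (alpha n) * cmod (U n)) {..<M}"

lemma l2norm_upto_sq: "(l2norm_upto M U)\<^sup>2 = (\<Sum>n<M. alpha n * (cmod (U n))\<^sup>2)"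
proof -
  have "(\<Sum>n<M. (sqrt (alpha n) * cmod (U n))\<^sup>2) = (\<Sum>n<M. alpha n * (cmod (U n))\<^sup>2)"
    by (intro sum.cong) (auto simp: power_mult_distrib less_imp_le[OF alpha_pos])
  moreover have "0 \<le> (\<Sum>n<M. alpha n * (cmod (U n))\<^sup>2)"
    by (intro sum_nonneg) (simp add: less_imp_le[OF alpha_pos])
  ultimately show ?thesis
    unfolding l2norm_upto_def L2_set_def by simp
qed

lemma l2norm_sq: "U \<in> l2 \<Longrightarrow> (l2norm U)\<^sup>2 = (\<Sum>n. alpha n * (cmod (U n))\<^sup>2)"
  unfolding l2norm_def l2_def
  by (simp add: suminf_nonneg less_imp_le[OF alpha_pos])

lemma l2norm_nonneg: "U \<in> l2 \<Longrightarrow> 0 \<le> l2norm U"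
  unfolding l2norm_def l2_def
  by (simp add: suminf_nonneg less_imp_le[OF alpha_pos])

lemma l2norm_upto_le_l2norm:
  assumes "U \<in> l2"
  shows "l2norm_upto M U \<le> l2norm U"
proof -
  have "(\<Sum>n<M. alpha n * (cmod (U n))\<^sup>2) \<le> (\<Sum>n. alpha n * (cmod (U n))\<^sup>2)"
    using assms unfolding l2_def
    by (intro sum_le_suminf) (auto simp: less_imp_le[OF alpha_pos])
  then have "(l2norm_upto M U)\<^sup>2 \<le> (l2norm U)\<^sup>2"
    by (simp add: l2norm_upto_sq l2norm_sq[OF assms])
  then show ?thesis
    using l2norm_nonneg[OF assms] by (rule power2_le_imp_le)
qed

lemma l2_if_l2norm_upto_bounded:
  assumes bounded: "\<And>M. l2norm_upto M U \<le> K"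
  shows "U \<in> l2" and "l2norm U \<le> K"
proof -
  have "0 \<le> K"
    using bounded[of 0] by (simp add: l2norm_upto_def)
  have partial: "(\<Sum>n<M. alpha n * (cmod (U n))\<^sup>2) \<le> K\<^sup>2" for M
    unfolding l2norm_upto_sq[symmetric]
    using bounded[of M] by (simp add: l2norm_upto_def power_mono)
  have summable: "summable (\<lambda>n. alpha n * (cmod (U n))\<^sup>2)"
    by (rule summableI_nonneg_bounded[OF _ partial]) (simp add: less_imp_le[OF alpha_pos])
  then show "U \<in> l2"
    by (simp add: l2_def)
  have "(\<Sum>n. alpha n * (cmod (U n))\<^sup>2) \<le> K\<^sup>2"
    by (rule suminf_le_const[OF summable partial])
  then have "l2norm U \<le> sqrt (K\<^sup>2)"
    unfolding l2norm_def by (rule real_sqrt_le_mono)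
  with \<open>0 \<le> K\<close> show "l2norm U \<le> K"
    by simp
qed

lemma l2norm_upto_triangle: "l2norm_upto M (U + V) \<le> l2norm_upto M U + l2norm_upto M V"
proof -
  have "l2norm_upto M (U + V)
      \<le> L2_set (\<lambda>n. sqrt (alpha n) * cmod (U n) + sqrt (alpha n) * cmod (V n)) {..<M}"
    unfolding l2norm_upto_def
    by (rule L2_set_mono)
       (auto simp: norm_triangle_ineq distrib_left[symmetric] mult_left_mono
          less_imp_le[OF alpha_pos])
  also have "\<dots> \<le> l2norm_upto M U + l2norm_upto M V"
    unfolding l2norm_upto_def by (rule L2_set_triangle_ineq)
  finally show ?thesis .
qed

lemma l2norm_upto_dominated:
  assumes "\<And>n. cmod (V n) \<le> K * cmod (U n)" and "0 \<le> K"
  shows "l2norm_upto M V \<le> K * l2norm_upto M U"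
  unfolding l2norm_upto_def
proof (subst L2_set_right_distrib[OF \<open>0 \<le> K\<close>], rule L2_set_mono)
  fix n
  show "sqrt (alpha n) * cmod (V n) \<le> K * (sqrt (alpha n) * cmod (U n))"
    using mult_left_mono[OF assms(1), of "sqrt (alpha n)"]
    by (simp add: mult.left_commute less_imp_le[OF alpha_pos])
qed (simp add: less_imp_le[OF alpha_pos])

lemma l2_add:
  assumes "U \<in> l2" and "V \<in> l2"
  shows "U + V \<in> l2" and "l2norm (U + V) \<le> l2norm U + l2norm V"
proof -
  have "l2norm_upto M (U + V) \<le> l2norm U + l2norm V" for M
    using l2norm_upto_triangle[of M U V] l2norm_upto_le_l2norm[OF assms(1), of M]
      l2norm_upto_le_l2norm[OF assms(2), of M] by linarith
  then show "U + V \<in> l2" and "l2norm (U + V) \<le> l2norm U + l2norm V"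
    by (rule l2_if_l2norm_upto_bounded)+
qed

lemma l2_dominated:
  assumes "U \<in> l2" and "\<And>n. cmod (V n) \<le> K * cmod (U n)" and "0 \<le> K"
  shows "V \<in> l2" and "l2norm V \<le> K * l2norm U"
proof -
  have "l2norm_upto M V \<le> K * l2norm U" for M
    using l2norm_upto_dominated[OF assms(2,3), of M]
      mult_left_mono[OF l2norm_upto_le_l2norm[OF assms(1)] assms(3)] by (meson order_trans)
  then show "V \<in> l2" and "l2norm V \<le> K * l2norm U"
    by (rule l2_if_l2norm_upto_bounded)+
qed

lemma l2_uminus: "U \<in> l2 \<Longrightarrow> - U \<in> l2" and l2norm_uminus: "l2norm (- U) = l2norm U"
  by (simp_all add: l2_def l2norm_def)

lemma l2_scale:
  assumes "U \<in> l2"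
  shows "(\<lambda>n. c * U n) \<in> l2" and "l2norm (\<lambda>n. c * U n) = cmod c * l2norm U"
proof -
  have summable: "summable (\<lambda>n. alpha n * (cmod (U n))\<^sup>2)"
    using assms by (simp add: l2_def)
  have terms: "alpha n * (cmod (c * U n))\<^sup>2 = (cmod c)\<^sup>2 * (alpha n * (cmod (U n))\<^sup>2)" for n
    by (simp add: norm_mult power_mult_distrib)
  show "(\<lambda>n. c * U n) \<in> l2"
    unfolding l2_def mem_Collect_eq terms by (rule summable_mult[OF summable])
  show "l2norm (\<lambda>n. c * U n) = cmod c * l2norm U"
    unfolding l2norm_def terms suminf_mult[OF summable] by (simp add: real_sqrt_mult)
qed

lemma l2norm_split:
  assumes "U \<in> l2"
  shows "(l2norm (Pi_le M U))\<^sup>2 + (l2norm (Pi_gt M U))\<^sup>2 = (l2norm U)\<^sup>2"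
proof -
  have low: "Pi_le M U \<in> l2" and high: "Pi_gt M U \<in> l2"
    by (rule l2_dominated(1)[OF assms, of _ 1]; simp add: Pi_le_def Pi_gt_def)+
  have "(\<lambda>n. alpha n * (cmod (U n))\<^sup>2)
      = (\<lambda>n. alpha n * (cmod (Pi_le M U n))\<^sup>2 + alpha n * (cmod (Pi_gt M U n))\<^sup>2)"
    by (auto simp: Pi_le_def Pi_gt_def)
  then show ?thesis
    using low high unfolding l2norm_sq[OF low] l2norm_sq[OF high] l2norm_sq[OF assms]
    by (simp add: l2_def suminf_add)
qed

lemma padd_eq_plus [simp]: "padd X Y = X + Y"
  by (simp add: padd_def plus_prod_def plus_fun_def)

lemma pdiff_eq_minus [simp]: "pdiff X Y = X - Y"
  by (simp add: pdiff_def minus_prod_def fun_diff_def)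

lemma l2e_norm_eq_norm_Pair: "l2e_norm X = norm (l2norm (fst X), l2norm (snd X))"
  by (simp add: l2e_norm_def norm_Pair)

lemma l2e_norm_nonneg: "0 \<le> l2e_norm X"
  by (simp add: l2e_norm_def)

lemma l2norm_fst_le_l2e_norm: "l2norm (fst X) \<le> l2e_norm X"
  and l2norm_snd_le_l2e_norm: "l2norm (snd X) \<le> l2e_norm X"
  by (auto simp: l2e_norm_def intro: real_le_rsqrt)

lemma l2e_norm_le_l2norm_add:
  assumes "X \<in> l2e"
  shows "l2e_norm X \<le> l2norm (fst X) + l2norm (snd X)"
  using assms unfolding l2e_norm_def l2e_def by (simp add: sqrt_sum_squares_le_sum l2norm_nonneg)

lemma norm_Pair_mono:
  fixes a b a' b' :: real
  assumes "0 \<le> a" and "a \<le> a'" and "0 \<le> b" and "b \<le> b'"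
  shows "norm (a, b) \<le> norm (a', b')"
  using assms by (simp add: norm_Pair add_mono power_mono)

lemma l2e_zero: "0 \<in> l2e" and l2e_norm_zero: "l2e_norm 0 = 0"
  by (simp_all add: l2e_def l2_def l2e_norm_def l2norm_def)

lemma l2e_add:
  assumes "X \<in> l2e" and "Y \<in> l2e"
  shows "X + Y \<in> l2e" and "l2e_norm (X + Y) \<le> l2e_norm X + l2e_norm Y"
proof -
  have X: "fst X \<in> l2" "snd X \<in> l2" and Y: "fst Y \<in> l2" "snd Y \<in> l2"
    using assms by (simp_all add: l2e_def)
  show "X + Y \<in> l2e"
    using X Y by (simp add: l2e_def l2_add)
  have "l2e_norm (X + Y)
      \<le> norm (l2norm (fst X) + l2norm (fst Y), l2norm (snd X) + l2norm (snd Y))"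
    unfolding l2e_norm_eq_norm_Pair using X Y
    by (intro norm_Pair_mono) (simp_all add: l2_add l2norm_nonneg)
  also have "\<dots> \<le> l2e_norm X + l2e_norm Y"
    unfolding l2e_norm_eq_norm_Pair
    using norm_triangle_ineq[of "(l2norm (fst X), l2norm (snd X))" "(l2norm (fst Y), l2norm (snd Y))"]
    by simp
  finally show "l2e_norm (X + Y) \<le> l2e_norm X + l2e_norm Y" .
qed

lemma l2e_uminus: "X \<in> l2e \<Longrightarrow> - X \<in> l2e" and l2e_norm_uminus: "l2e_norm (- X) = l2e_norm X"
  by (simp_all add: l2e_def l2e_norm_def l2_uminus l2norm_uminus)

lemma l2e_diff:
  assumes "X \<in> l2e" and "Y \<in> l2e"
  shows "X - Y \<in> l2e" and "l2e_norm (X - Y) \<le> l2e_norm X + l2e_norm Y"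
  using l2e_add[OF assms(1) l2e_uminus[OF assms(2)]] by (simp_all add: l2e_norm_uminus)

lemma l2e_psmult:
  assumes "X \<in> l2e"
  shows "psmult c X \<in> l2e" and "l2e_norm (psmult c X) = cmod c * l2e_norm X"
proof -
  have X: "fst X \<in> l2" "snd X \<in> l2"
    using assms by (simp_all add: l2e_def)
  then show "psmult c X \<in> l2e"
    by (simp add: psmult_def l2e_def l2_scale)
  have "l2e_norm (psmult c X) = sqrt ((cmod c)\<^sup>2 * ((l2norm (fst X))\<^sup>2 + (l2norm (snd X))\<^sup>2))"
    using X by (simp add: psmult_def l2e_norm_def l2_scale power_mult_distrib distrib_left)
  then show "l2e_norm (psmult c X) = cmod c * l2e_norm X"
    by (simp add: l2e_norm_def real_sqrt_mult)
qed

lemma l2e_dominated: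
  assumes "X \<in> l2e"
    and "\<And>n. cmod (fst Y n) \<le> cmod (fst X n)" and "\<And>n. cmod (snd Y n) \<le> cmod (snd X n)"
  shows "Y \<in> l2e" and "l2e_norm Y \<le> l2e_norm X"
proof -
  have X: "fst X \<in> l2" "snd X \<in> l2"
    using assms(1) by (simp_all add: l2e_def)
  note fst = l2_dominated[OF X(1), of "fst Y" 1] and snd = l2_dominated[OF X(2), of "snd Y" 1]
  show "Y \<in> l2e"
    using fst snd assms(2,3) by (simp add: l2e_def)
  show "l2e_norm Y \<le> l2e_norm X"
    unfolding l2e_norm_eq_norm_Pair using fst snd assms(2,3)
    by (intro norm_Pair_mono) (simp_all add: l2norm_nonneg)
qed

lemma l2e_PPi_le:
  assumes "X \<in> l2e"
  shows "PPi_le M X \<in> l2e" and "l2e_norm (PPi_le M X) \<le> l2e_norm X"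
  by (rule l2e_dominated[OF assms]; simp add: PPi_le_def Pi_le_def)+

lemma l2e_PPi_gt:
  assumes "X \<in> l2e"
  shows "PPi_gt M X \<in> l2e" and "l2e_norm (PPi_gt M X) \<le> l2e_norm X"
  by (rule l2e_dominated[OF assms]; simp add: PPi_gt_def Pi_gt_def)+

lemma l2e_norm_split:
  assumes "X \<in> l2e"
  shows "(l2e_norm (PPi_le M X))\<^sup>2 + (l2norm (fst (PPi_gt M X)))\<^sup>2 + (l2norm (snd (PPi_gt M X)))\<^sup>2
    = (l2e_norm X)\<^sup>2"
  using l2norm_split[of "fst X" M] l2norm_split[of "snd X" M] assms
  by (simp add: l2e_def l2e_norm_def PPi_le_def PPi_gt_def)

lemma PPi_le_add: "PPi_le M (X + Y) = PPi_le M X + PPi_le M Y"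
  and PPi_gt_add: "PPi_gt M (X + Y) = PPi_gt M X + PPi_gt M Y"
  by (auto simp: PPi_le_def PPi_gt_def Pi_le_def Pi_gt_def fun_eq_iff)

lemma PPi_le_add_PPi_gt: "PPi_le M X + PPi_gt M X = X"
  by (auto simp: PPi_le_def PPi_gt_def Pi_le_def Pi_gt_def fun_eq_iff prod_eq_iff)

lemma PPi_le_PPi_le: "PPi_le M (PPi_le K X) = PPi_le (min M K) X"
  by (auto simp: PPi_le_def Pi_le_def fun_eq_iff)

lemma PPi_gt_PPi_gt: "PPi_gt M (PPi_gt K X) = PPi_gt (max M K) X"
  by (auto simp: PPi_gt_def Pi_gt_def fun_eq_iff)

lemma PPi_le_PPi_gt: "PPi_le M (PPi_gt K X) = PPi_gt K (PPi_le M X)"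
  by (auto simp: PPi_le_def PPi_gt_def Pi_le_def Pi_gt_def fun_eq_iff)

lemma PPi_le_psmult: "PPi_le M (psmult c X) = psmult c (PPi_le M X)"
  and PPi_gt_psmult: "PPi_gt M (psmult c X) = psmult c (PPi_gt M X)"
  by (auto simp: PPi_le_def PPi_gt_def Pi_le_def Pi_gt_def psmult_def fun_eq_iff)

lemma psmult_add: "psmult c (X + Y) = psmult c X + psmult c Y"
  and psmult_diff: "psmult c (X - Y) = psmult c X - psmult c Y"
  and psmult_zero: "psmult 0 X = 0"
  by (auto simp: psmult_def fun_eq_iff prod_eq_iff algebra_simps)

lemma PPi_le_eq_self_iff: "PPi_le M X = X \<longleftrightarrow> (\<forall>n>M. fst X n = 0 \<and> snd X n = 0)"
  by (auto simp: PPi_le_def Pi_le_def prod_eq_iff fun_eq_iff)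

lemma PPi_gt_eq_self_iff: "PPi_gt M X = X \<longleftrightarrow> (\<forall>n\<le>M. fst X n = 0 \<and> snd X n = 0)"
  by (auto simp: PPi_gt_def Pi_gt_def prod_eq_iff fun_eq_iff)

section \<open>Bounded operators and the operator norm\<close>

definition l2e_bounded :: "(seqpair \<Rightarrow> seqpair) \<Rightarrow> bool" where
  "l2e_bounded T \<longleftrightarrow> (\<forall>X\<in>l2e. T X \<in> l2e) \<and> (\<exists>K. \<forall>X\<in>l2e. l2e_norm (T X) \<le> K * l2e_norm X)"

lemma l2e_boundedI:
  assumes "\<And>X. X \<in> l2e \<Longrightarrow> T X \<in> l2e" and "\<And>X. X \<in> l2e \<Longrightarrow> l2e_norm (T X) \<le> K * l2e_norm X"
  shows "l2e_bounded T"
  using assms unfolding l2e_bounded_def by blast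

lemma l2e_bounded_maps: "l2e_bounded T \<Longrightarrow> X \<in> l2e \<Longrightarrow> T X \<in> l2e"
  by (simp add: l2e_bounded_def)

lemma l2e_bounded_nonneg_bound:
  assumes "l2e_bounded T"
  obtains K where "0 \<le> K" and "\<And>X. X \<in> l2e \<Longrightarrow> l2e_norm (T X) \<le> K * l2e_norm X"
proof -
  obtain K where K: "\<And>X. X \<in> l2e \<Longrightarrow> l2e_norm (T X) \<le> K * l2e_norm X"
    using assms by (auto simp: l2e_bounded_def)
  show thesis
  proof (rule that[of "max K 0"])
    fix X assume "X \<in> l2e"
    have "K * l2e_norm X \<le> max K 0 * l2e_norm X"
      by (intro mult_right_mono) (simp_all add: l2e_norm_nonneg)
    with K[OF \<open>X \<in> l2e\<close>] show "l2e_norm (T X) \<le> max K 0 * l2e_norm X"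
      by linarith
  qed simp
qed

lemma l2e_bounded_comp:
  assumes "l2e_bounded S" and "l2e_bounded T"
  shows "l2e_bounded (\<lambda>X. S (T X))"
proof -
  obtain KS where "0 \<le> KS" and KS: "\<And>X. X \<in> l2e \<Longrightarrow> l2e_norm (S X) \<le> KS * l2e_norm X"
    using l2e_bounded_nonneg_bound[OF assms(1)] by blast
  obtain KT where "0 \<le> KT" and KT: "\<And>X. X \<in> l2e \<Longrightarrow> l2e_norm (T X) \<le> KT * l2e_norm X"
    using l2e_bounded_nonneg_bound[OF assms(2)] by blast
  show ?thesis
  proof (rule l2e_boundedI)
    fix X assume X: "X \<in> l2e"
    then show "S (T X) \<in> l2e"
      using assms by (simp add: l2e_bounded_maps)
    have "l2e_norm (S (T X)) \<le> KS * l2e_norm (T X)"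
      using KS X assms(2) by (simp add: l2e_bounded_maps)
    also have "\<dots> \<le> KS * (KT * l2e_norm X)"
      using KT[OF X] \<open>0 \<le> KS\<close> by (rule mult_left_mono)
    finally show "l2e_norm (S (T X)) \<le> (KS * KT) * l2e_norm X"
      by simp
  qed
qed

lemma l2e_bounded_add:
  assumes "l2e_bounded S" and "l2e_bounded T"
  shows "l2e_bounded (\<lambda>X. S X + T X)"
proof -
  obtain KS where "0 \<le> KS" and KS: "\<And>X. X \<in> l2e \<Longrightarrow> l2e_norm (S X) \<le> KS * l2e_norm X"
    using l2e_bounded_nonneg_bound[OF assms(1)] by blast
  obtain KT where "0 \<le> KT" and KT: "\<And>X. X \<in> l2e \<Longrightarrow> l2e_norm (T X) \<le> KT * l2e_norm X"
    using l2e_bounded_nonneg_bound[OF assms(2)] by blast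
  show ?thesis
  proof (rule l2e_boundedI)
    fix X assume X: "X \<in> l2e"
    then have "S X \<in> l2e" "T X \<in> l2e"
      using assms by (simp_all add: l2e_bounded_maps)
    then show "S X + T X \<in> l2e"
      by (rule l2e_add)
    have "l2e_norm (S X + T X) \<le> l2e_norm (S X) + l2e_norm (T X)"
      using \<open>S X \<in> l2e\<close> \<open>T X \<in> l2e\<close> by (rule l2e_add)
    with KS[OF X] KT[OF X] show "l2e_norm (S X + T X) \<le> (KS + KT) * l2e_norm X"
      by (simp add: distrib_right)
  qed
qed

lemma l2e_bounded_uminus: "l2e_bounded T \<Longrightarrow> l2e_bounded (\<lambda>X. - T X)"
  unfolding l2e_bounded_def by (simp add: l2e_uminus l2e_norm_uminus)

lemma l2e_bounded_diff:
  assumes "l2e_bounded S" and "l2e_bounded T"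
  shows "l2e_bounded (\<lambda>X. S X - T X)"
  using l2e_bounded_add[OF assms(1) l2e_bounded_uminus[OF assms(2)]] by simp

lemma l2e_bounded_id: "l2e_bounded (\<lambda>X. X)"
  by (rule l2e_boundedI[where K=1]) simp_all

lemma l2e_bounded_PPi_le: "l2e_bounded (PPi_le M)"
  and l2e_bounded_PPi_gt: "l2e_bounded (PPi_gt M)"
  by (rule l2e_boundedI[where K=1]; simp add: l2e_PPi_le l2e_PPi_gt)+

lemma opnorm_le:
  assumes "\<And>X. X \<in> l2e \<Longrightarrow> l2e_norm X \<le> 1 \<Longrightarrow> l2e_norm (T X) \<le> K"
  shows "opnorm T \<le> K"
  unfolding opnorm_def
proof (rule cSup_least)
  show "{l2e_norm (T X) |X. X \<in> l2e \<and> l2e_norm X \<le> 1} \<noteq> {}"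
    using l2e_zero l2e_norm_zero by fastforce
qed (use assms in blast)

lemma l2e_norm_le_opnorm_unit:
  assumes "l2e_bounded T" and "X \<in> l2e" and "l2e_norm X \<le> 1"
  shows "l2e_norm (T X) \<le> opnorm T"
proof -
  obtain K where "0 \<le> K" and K: "\<And>X. X \<in> l2e \<Longrightarrow> l2e_norm (T X) \<le> K * l2e_norm X"
    using l2e_bounded_nonneg_bound[OF assms(1)] by blast
  have "l2e_norm (T X) \<in> {l2e_norm (T X) |X. X \<in> l2e \<and> l2e_norm X \<le> 1}"
    using assms(2,3) by blast
  moreover have "bdd_above {l2e_norm (T X) |X. X \<in> l2e \<and> l2e_norm X \<le> 1}"
  proof (rule bdd_aboveI)
    fix x assume "x \<in> {l2e_norm (T X) |X. X \<in> l2e \<and> l2e_norm X \<le> 1}"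
    then obtain Y where "Y \<in> l2e" "l2e_norm Y \<le> 1" "x = l2e_norm (T Y)"
      by blast
    then show "x \<le> K"
      using K[of Y] mult_left_mono[of "l2e_norm Y" 1 K] \<open>0 \<le> K\<close> by auto
  qed
  ultimately show ?thesis
    unfolding opnorm_def by (rule cSup_upper)
qed

lemma l2e_norm_le_opnorm:
  assumes "l2e_bounded T" and homogeneous: "\<And>c X. X \<in> l2e \<Longrightarrow> T (psmult c X) = psmult c (T X)"
    and "X \<in> l2e"
  shows "l2e_norm (T X) \<le> opnorm T * l2e_norm X"
proof (cases "l2e_norm X = 0")
  case True
  obtain K where "\<And>X. X \<in> l2e \<Longrightarrow> l2e_norm (T X) \<le> K * l2e_norm X"
    using l2e_bounded_nonneg_bound[OF assms(1)] by blast
  then show ?thesis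
    using True assms(3) l2e_norm_nonneg[of "T X"] by fastforce
next
  case False
  then have pos: "0 < l2e_norm X"
    using l2e_norm_nonneg[of X] by linarith
  define c where "c = complex_of_real (1 / l2e_norm X)"
  have unit: "psmult c X \<in> l2e" "l2e_norm (psmult c X) = 1"
    using l2e_psmult[OF assms(3), of c] pos by (simp_all add: c_def norm_divide)
  have "l2e_norm (T X) / l2e_norm X = l2e_norm (T (psmult c X))"
    using l2e_psmult(2)[OF l2e_bounded_maps[OF assms(1,3)], of c] pos
    by (simp add: homogeneous[OF assms(3)] c_def norm_divide)
  also have "\<dots> \<le> opnorm T"
    using l2e_norm_le_opnorm_unit[OF assms(1) unit(1)] unit(2) by simp
  finally show ?thesis
    using pos by (simp add: divide_le_eq)
qed

section \<open>Convolution with finitely supported sequences\<close>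

text \<open>The weight alpha n = 2 (n > 0) accounts for the two integers n and -n, so weighted sums
  over the naturals are sums of even functions over symmetric ranges of integers.\<close>

lemma sum_symmetric_even:
  fixes f :: "int \<Rightarrow> real"
  assumes even: "\<And>j. f (- j) = f j"
  shows "(\<Sum>j\<in>{1 - int M..int M - 1}. f j) = (\<Sum>n<M. alpha n * f (int n))"
proof (induction M)
  case 0
  then show ?case by simp
next
  case (Suc M)
  show ?case
  proof (cases "M = 0")
    case True
    then show ?thesis by (simp add: alpha_def)
  next
    case False
    have "{1 - int (Suc M)..int (Suc M) - 1} = insert (- int M) (insert (int M) {1 - int M..int M - 1})"
      by auto
    then have "(\<Sum>j\<in>{1 - int (Suc M)..int (Suc M) - 1}. f j)
        = f (- int M) + (f (int M) + (\<Sum>j\<in>{1 - int M..int M - 1}. f j))"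
      using False by (simp add: sum.insert)
    also have "\<dots> = alpha M * f (int M) + (\<Sum>n<M. alpha n * f (int n))"
      using Suc.IH even[of "int M"] False by (simp add: alpha_def)
    finally show ?thesis by simp
  qed
qed

lemma l2norm_upto_eq_L2_set_int:
  "l2norm_upto M U = L2_set (\<lambda>j. cmod (U (nat \<bar>j\<bar>))) {1 - int M..int M - 1}"
proof -
  have "(\<Sum>j\<in>{1 - int M..int M - 1}. (cmod (U (nat \<bar>j\<bar>)))\<^sup>2) = (l2norm_upto M U)\<^sup>2"
    unfolding l2norm_upto_sq by (subst sum_symmetric_even) auto
  then show ?thesis
    unfolding L2_set_def by (simp add: l2norm_upto_def)
qed

lemma l1norm_eq_sum_int:
  assumes "\<forall>n>N. V n = 0"
  shows "l1norm V = (\<Sum>k\<in>{- int N..int N}. cmod (V (nat \<bar>k\<bar>)))"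
proof -
  have "l1norm V = (\<Sum>n<Suc N. alpha n * cmod (V n))"
    unfolding l1norm_def using assms by (intro suminf_finite) auto
  also have "\<dots> = (\<Sum>k\<in>{1 - int (Suc N)..int (Suc N) - 1}. cmod (V (nat \<bar>k\<bar>)))"
    by (subst sum_symmetric_even) auto
  also have "{1 - int (Suc N)..int (Suc N) - 1} = {- int N..int N}"
    by auto
  finally show ?thesis .
qed

lemma l1norm_nonneg: "\<forall>n>N. V n = 0 \<Longrightarrow> 0 \<le> l1norm V"
  by (simp add: l1norm_eq_sum_int sum_nonneg)

lemma conv_eq_sum:
  assumes "\<forall>n>N. V n = 0"
  shows "conv V W n = (\<Sum>k\<in>{- int N..int N}. V (nat \<bar>k\<bar>) * W (nat \<bar>int n - k\<bar>))"
  unfolding conv_def using assms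
  by (subst infsum_cong_neutral[where T="{- int N..int N}"]) auto

lemma conv_add: "\<forall>n>N. V n = 0 \<Longrightarrow> conv V (W + W') = conv V W + conv V W'"
  by (simp add: fun_eq_iff conv_eq_sum distrib_left sum.distrib)

lemma conv_scale: "\<forall>n>N. V n = 0 \<Longrightarrow> conv V (\<lambda>n. c * W n) = (\<lambda>n. c * conv V W n)"
  by (simp add: fun_eq_iff conv_eq_sum sum_distrib_left mult.left_commute)

lemma conv_eq_zero_low:
  "\<forall>n>N. V n = 0 \<Longrightarrow> \<forall>m\<le>K. W m = 0 \<Longrightarrow> n + N \<le> K \<Longrightarrow> conv V W n = 0"
  by (simp add: conv_eq_sum, intro sum.neutral) auto

lemma conv_eq_zero_high:
  "\<forall>n>N. V n = 0 \<Longrightarrow> \<forall>m>K. W m = 0 \<Longrightarrow> K + N < n \<Longrightarrow> conv V W n = 0"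
  by (simp add: conv_eq_sum, intro sum.neutral) auto

lemma L2_set_sum_le:
  "finite K \<Longrightarrow> L2_set (\<lambda>j. \<Sum>k\<in>K. g k j) A \<le> (\<Sum>k\<in>K. L2_set (g k) A)"
proof (induction K rule: finite_induct)
  case empty
  then show ?case by (simp add: L2_set_0')
next
  case (insert k K)
  have "L2_set (\<lambda>j. \<Sum>k'\<in>insert k K. g k' j) A = L2_set (\<lambda>j. g k j + (\<Sum>k'\<in>K. g k' j)) A"
    using insert by simp
  also have "\<dots> \<le> L2_set (g k) A + L2_set (\<lambda>j. \<Sum>k'\<in>K. g k' j) A"
    by (rule L2_set_triangle_ineq)
  also have "\<dots> \<le> L2_set (g k) A + (\<Sum>k'\<in>K. L2_set (g k') A)"
    using insert by simp
  finally show ?case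
    using insert by simp
qed

lemma L2_set_shift_le:
  fixes h :: "int \<Rightarrow> real"
  assumes "k \<in> {- int N..int N}"
  shows "L2_set (\<lambda>j. h (j - k)) {1 - int M..int M - 1} \<le> L2_set h {1 - int (M + N)..int (M + N) - 1}"
proof -
  have "(\<Sum>j\<in>{1 - int M..int M - 1}. (h (j - k))\<^sup>2) = (\<Sum>i\<in>(\<lambda>j. j - k) ` {1 - int M..int M - 1}. (h i)\<^sup>2)"
    by (subst sum.reindex) (auto simp: inj_on_def)
  also have "\<dots> \<le> (\<Sum>i\<in>{1 - int (M + N)..int (M + N) - 1}. (h i)\<^sup>2)"
    by (rule sum_mono2) (use assms in auto)
  finally show ?thesis
    unfolding L2_set_def by (rule real_sqrt_le_mono)
qed

lemma conv_nat_abs_eq_sum: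
  assumes V: "\<forall>n>N. V n = 0"
  shows "conv V W (nat \<bar>j\<bar>) = (\<Sum>k\<in>{- int N..int N}. V (nat \<bar>k\<bar>) * W (nat \<bar>j - k\<bar>))"
proof -
  define c where "c = (\<lambda>j::int. \<Sum>k\<in>{- int N..int N}. V (nat \<bar>k\<bar>) * W (nat \<bar>j - k\<bar>))"
  have "c (- j) = (\<Sum>k\<in>{- int N..int N}. V (nat \<bar>- k\<bar>) * W (nat \<bar>- j - - k\<bar>))"
    unfolding c_def by (rule sum.reindex_bij_witness[of _ uminus uminus]) auto
  also have "\<dots> = c j"
    unfolding c_def by (intro sum.cong) (auto simp: abs_minus_commute)
  finally have "c (- j) = c j" .
  moreover have "conv V W (nat \<bar>j\<bar>) = c \<bar>j\<bar>"
    unfolding c_def using conv_eq_sum[OF V] by simp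
  ultimately have "conv V W (nat \<bar>j\<bar>) = c j"
    by (cases "j \<ge> 0") auto
  then show ?thesis
    by (simp add: c_def)
qed

text \<open>Young's inequality is proved on the symmetric extension to the integers, where the
  convolution becomes a finite sum of shifts, none of which increases the norm.\<close>

lemma l2norm_upto_conv_le:
  assumes V: "\<forall>n>N. V n = 0" and W: "W \<in> l2"
  shows "l2norm_upto M (conv V W) \<le> l1norm V * l2norm W"
proof -
  define K where "K = {- int N..int N}"
  define I where "I = {1 - int M..int M - 1}"
  have "l2norm_upto M (conv V W)
      = L2_set (\<lambda>j. cmod (\<Sum>k\<in>K. V (nat \<bar>k\<bar>) * W (nat \<bar>j - k\<bar>))) I"
    unfolding l2norm_upto_eq_L2_set_int I_def K_def conv_nat_abs_eq_sum[OF V] ..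
  also have "\<dots> \<le> L2_set (\<lambda>j. \<Sum>k\<in>K. cmod (V (nat \<bar>k\<bar>)) * cmod (W (nat \<bar>j - k\<bar>))) I"
    by (rule L2_set_mono) (auto intro: order_trans[OF norm_sum] simp: norm_mult)
  also have "\<dots> \<le> (\<Sum>k\<in>K. L2_set (\<lambda>j. cmod (V (nat \<bar>k\<bar>)) * cmod (W (nat \<bar>j - k\<bar>))) I)"
    by (rule L2_set_sum_le) (simp add: K_def)
  also have "\<dots> = (\<Sum>k\<in>K. cmod (V (nat \<bar>k\<bar>)) * L2_set (\<lambda>j. cmod (W (nat \<bar>j - k\<bar>))) I)"
    by (simp add: L2_set_right_distrib)
  also have "\<dots> \<le> (\<Sum>k\<in>K. cmod (V (nat \<bar>k\<bar>)) * l2norm W)"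
  proof (intro sum_mono mult_left_mono)
    fix k assume "k \<in> K"
    then have "L2_set (\<lambda>j. cmod (W (nat \<bar>j - k\<bar>))) I
        \<le> L2_set (\<lambda>j. cmod (W (nat \<bar>j\<bar>))) {1 - int (M + N)..int (M + N) - 1}"
      unfolding I_def K_def by (rule L2_set_shift_le)
    also have "\<dots> = l2norm_upto (M + N) W"
      by (simp add: l2norm_upto_eq_L2_set_int)
    also have "\<dots> \<le> l2norm W"
      by (rule l2norm_upto_le_l2norm[OF W])
    finally show "L2_set (\<lambda>j. cmod (W (nat \<bar>j - k\<bar>))) I \<le> l2norm W" .
  qed simp
  also have "\<dots> = l1norm V * l2norm W"
    by (simp add: l1norm_eq_sum_int[OF V] K_def sum_distrib_right)
  finally show ?thesis .
qed

lemma conv_l2: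
  assumes "\<forall>n>N. V n = 0" and "W \<in> l2"
  shows "conv V W \<in> l2" and "l2norm (conv V W) \<le> l1norm V * l2norm W"
  using l2norm_upto_conv_le[OF assms] by (rule l2_if_l2norm_upto_bounded)+

section \<open>The entries of l^{-1}\<close>

lemma bounded_if_continuous_tendsto_zero:
  fixes f :: "real \<Rightarrow> real"
  assumes "continuous_on {0..} f" and "(f \<longlongrightarrow> 0) at_top"
  obtains C where "\<And>t. 0 \<le> t \<Longrightarrow> \<bar>f t\<bar> \<le> C"
proof -
  have "eventually (\<lambda>t. dist (f t) 0 < 1) at_top"
    using assms(2) by (simp add: tendsto_iff)
  then obtain R where R: "\<And>t. R \<le> t \<Longrightarrow> \<bar>f t\<bar> < 1"
    by (auto simp: eventually_at_top_linorder)
  have "compact (f ` {0..R})"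
    by (rule compact_continuous_image[OF continuous_on_subset[OF assms(1)]]) auto
  then obtain B where B: "\<And>y. y \<in> f ` {0..R} \<Longrightarrow> \<bar>y\<bar> \<le> B"
    using compact_imp_bounded bounded_real by metis
  show thesis
  proof (rule that[of "max B 1"])
    fix t :: real assume "0 \<le> t"
    then show "\<bar>f t\<bar> \<le> max B 1"
      using R[of t] B[of "f t"] by (cases "t \<le> R") auto
  qed
qed

lemma rational_bounded:
  fixes \<nu> p q a b :: real
  assumes "0 < \<nu>" and "\<And>t. 0 \<le> t \<Longrightarrow> \<nu> * t\<^sup>2 + p * t + q \<noteq> 0"
  obtains C where "\<And>t. 0 \<le> t \<Longrightarrow> \<bar>(a * t + b) / (\<nu> * t\<^sup>2 + p * t + q)\<bar> \<le> C"
proof (rule bounded_if_continuous_tendsto_zero)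
  show "continuous_on {0..} (\<lambda>t. (a * t + b) / (\<nu> * t\<^sup>2 + p * t + q))"
    using assms(2) by (intro continuous_intros) auto
  show "((\<lambda>t. (a * t + b) / (\<nu> * t\<^sup>2 + p * t + q)) \<longlongrightarrow> 0) at_top"
    using assms(1) by real_asymp
qed (rule that)

lemma lden_eq_polynomial:
  "lden \<nu> \<nu>1 \<nu>2 \<nu>3 \<xi>
    = \<nu> * ((2*pi*\<bar>\<xi>\<bar>)\<^sup>2)\<^sup>2 + (\<nu> * \<nu>2 - \<nu>1) * (2*pi*\<bar>\<xi>\<bar>)\<^sup>2 + (- \<nu>1 * \<nu>2 - \<nu>2 * \<nu>3)"
  unfolding lden_def l11_def l12_def l21_def l22_def by (simp add: algebra_simps power2_eq_square)

lemma ratio_over_lden_bounded: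
  assumes "0 < \<nu>" and "\<forall>\<xi>. lden \<nu> \<nu>1 \<nu>2 \<nu>3 \<xi> \<noteq> 0"
  obtains C where "\<And>\<xi>. \<bar>(a * (2*pi*\<bar>\<xi>\<bar>)\<^sup>2 + b) / lden \<nu> \<nu>1 \<nu>2 \<nu>3 \<xi>\<bar> \<le> C"
proof -
  have "\<nu> * t\<^sup>2 + (\<nu> * \<nu>2 - \<nu>1) * t + (- \<nu>1 * \<nu>2 - \<nu>2 * \<nu>3) \<noteq> 0" if "0 \<le> t" for t
  proof -
    have "(2*pi*\<bar>sqrt t / (2*pi)\<bar>)\<^sup>2 = t"
      using that by simp
    then show ?thesis
      using assms(2) lden_eq_polynomial[of \<nu> \<nu>1 \<nu>2 \<nu>3 "sqrt t / (2*pi)"] by metis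
  qed
  then obtain C
    where C: "\<And>t. 0 \<le> t \<Longrightarrow> \<bar>(a * t + b) / (\<nu> * t\<^sup>2 + (\<nu> * \<nu>2 - \<nu>1) * t + (- \<nu>1 * \<nu>2 - \<nu>2 * \<nu>3))\<bar> \<le> C"
    using rational_bounded[OF assms(1)] by blast
  show thesis
  proof (rule that)
    fix \<xi> :: real
    show "\<bar>(a * (2*pi*\<bar>\<xi>\<bar>)\<^sup>2 + b) / lden \<nu> \<nu>1 \<nu>2 \<nu>3 \<xi>\<bar> \<le> C"
      using C[of "(2*pi*\<bar>\<xi>\<bar>)\<^sup>2"] unfolding lden_eq_polynomial by simp
  qed
qed

lemma l_entries_over_lden_bounded:
  assumes "0 < \<nu>" and "\<forall>\<xi>. lden \<nu> \<nu>1 \<nu>2 \<nu>3 \<xi> \<noteq> 0"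
  obtains C where "0 \<le> C"
    and "\<And>\<xi>. \<bar>l11 \<nu> \<nu>1 \<xi> / lden \<nu> \<nu>1 \<nu>2 \<nu>3 \<xi>\<bar> \<le> C \<and> \<bar>l12 \<nu>2 \<xi> / lden \<nu> \<nu>1 \<nu>2 \<nu>3 \<xi>\<bar> \<le> C
      \<and> \<bar>l21 \<nu>3 \<xi> / lden \<nu> \<nu>1 \<nu>2 \<nu>3 \<xi>\<bar> \<le> C \<and> \<bar>l22 \<nu>2 \<xi> / lden \<nu> \<nu>1 \<nu>2 \<nu>3 \<xi>\<bar> \<le> C"
proof -
  \<comment> \<open>Each entry of the adjugate of l is affine in (2 pi |xi|)^2.\<close>
  obtain C11 where C11: "\<And>\<xi>. \<bar>(- \<nu> * (2*pi*\<bar>\<xi>\<bar>)\<^sup>2 + \<nu>1) / lden \<nu> \<nu>1 \<nu>2 \<nu>3 \<xi>\<bar> \<le> C11"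
    using ratio_over_lden_bounded[OF assms] by blast
  obtain C12 where C12: "\<And>\<xi>. \<bar>(0 * (2*pi*\<bar>\<xi>\<bar>)\<^sup>2 + \<nu>2) / lden \<nu> \<nu>1 \<nu>2 \<nu>3 \<xi>\<bar> \<le> C12"
    using ratio_over_lden_bounded[OF assms] by blast
  obtain C21 where C21: "\<And>\<xi>. \<bar>(0 * (2*pi*\<bar>\<xi>\<bar>)\<^sup>2 + \<nu>3) / lden \<nu> \<nu>1 \<nu>2 \<nu>3 \<xi>\<bar> \<le> C21"
    using ratio_over_lden_bounded[OF assms] by blast
  obtain C22 where C22: "\<And>\<xi>. \<bar>(- 1 * (2*pi*\<bar>\<xi>\<bar>)\<^sup>2 + - \<nu>2) / lden \<nu> \<nu>1 \<nu>2 \<nu>3 \<xi>\<bar> \<le> C22"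
    using ratio_over_lden_bounded[OF assms] by blast
  define C where "C = max (max C11 C12) (max C21 C22)"
  have "0 \<le> C11"
    using C11[of 0] by (meson abs_ge_zero order_trans)
  then have "0 \<le> C"
    by (simp add: C_def le_max_iff_disj)
  moreover have "\<bar>l11 \<nu> \<nu>1 \<xi> / lden \<nu> \<nu>1 \<nu>2 \<nu>3 \<xi>\<bar> \<le> C \<and> \<bar>l12 \<nu>2 \<xi> / lden \<nu> \<nu>1 \<nu>2 \<nu>3 \<xi>\<bar> \<le> C
      \<and> \<bar>l21 \<nu>3 \<xi> / lden \<nu> \<nu>1 \<nu>2 \<nu>3 \<xi>\<bar> \<le> C \<and> \<bar>l22 \<nu>2 \<xi> / lden \<nu> \<nu>1 \<nu>2 \<nu>3 \<xi>\<bar> \<le> C" for \<xi>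
    using C11[of \<xi>] C12[of \<xi>] C21[of \<xi>] C22[of \<xi>]
    by (simp add: C_def l11_def l12_def l21_def l22_def le_max_iff_disj)
  ultimately show thesis
    by (rule that)
qed

lemma abs_le_supgt:
  assumes "\<And>\<xi>. \<bar>f \<xi>\<bar> \<le> C" and "M < n"
  shows "\<bar>f (ntilde d n)\<bar> \<le> supgt d M f"
  unfolding supgt_def using assms by (intro cSup_upper) (auto intro!: bdd_aboveI)

lemma supgt_nonneg: "(\<And>\<xi>. \<bar>f \<xi>\<bar> \<le> C) \<Longrightarrow> 0 \<le> supgt d M f"
  using abs_le_supgt[of f C M "Suc M" d] by (meson abs_ge_zero lessI order_trans)

lemma fst_linv:
  "fst (linv d \<nu> \<nu>1 \<nu>2 \<nu>3 X) = (\<lambda>n.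
       complex_of_real (l22 \<nu>2 (ntilde d n) / lden \<nu> \<nu>1 \<nu>2 \<nu>3 (ntilde d n)) * fst X n
     + complex_of_real (- (l12 \<nu>2 (ntilde d n) / lden \<nu> \<nu>1 \<nu>2 \<nu>3 (ntilde d n))) * snd X n)"
  by (simp add: linv_def Let_def)

lemma snd_linv:
  "snd (linv d \<nu> \<nu>1 \<nu>2 \<nu>3 X) = (\<lambda>n.
       complex_of_real (- (l21 \<nu>3 (ntilde d n) / lden \<nu> \<nu>1 \<nu>2 \<nu>3 (ntilde d n))) * fst X n
     + complex_of_real (l11 \<nu> \<nu>1 (ntilde d n) / lden \<nu> \<nu>1 \<nu>2 \<nu>3 (ntilde d n)) * snd X n)"
  by (simp add: linv_def Let_def)

lemma l2_lin_comb:
  assumes U: "U \<in> l2" and V: "V \<in> l2" and "0 \<le> Ka" and "0 \<le> Kb"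
    and coeff: "\<And>n. U n \<noteq> 0 \<or> V n \<noteq> 0 \<Longrightarrow> cmod (a n) \<le> Ka \<and> cmod (b n) \<le> Kb"
  shows "(\<lambda>n. a n * U n + b n * V n) \<in> l2"
    and "l2norm (\<lambda>n. a n * U n + b n * V n) \<le> Ka * l2norm U + Kb * l2norm V"
proof -
  have "cmod (a n * U n) \<le> Ka * cmod (U n)" for n
    using coeff[of n] by (cases "U n = 0") (auto simp: norm_mult mult_right_mono)
  note aU = l2_dominated[OF U this \<open>0 \<le> Ka\<close>]
  have "cmod (b n * V n) \<le> Kb * cmod (V n)" for n
    using coeff[of n] by (cases "V n = 0") (auto simp: norm_mult mult_right_mono)
  note bV = l2_dominated[OF V this \<open>0 \<le> Kb\<close>]
  have sum: "(\<lambda>n. a n * U n + b n * V n) = (\<lambda>n. a n * U n) + (\<lambda>n. b n * V n)"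
    by (simp add: plus_fun_def)
  show "(\<lambda>n. a n * U n + b n * V n) \<in> l2"
    unfolding sum by (rule l2_add(1)[OF aU(1) bV(1)])
  show "l2norm (\<lambda>n. a n * U n + b n * V n) \<le> Ka * l2norm U + Kb * l2norm V"
    unfolding sum using l2_add(2)[OF aU(1) bV(1)] aU(2) bV(2) by linarith
qed

lemma linv_bounds:
  assumes X: "X \<in> l2e" and "0 \<le> k11" "0 \<le> k12" "0 \<le> k21" "0 \<le> k22"
    and coeff: "\<And>n. fst X n \<noteq> 0 \<or> snd X n \<noteq> 0 \<Longrightarrow>
        \<bar>l11 \<nu> \<nu>1 (ntilde d n) / lden \<nu> \<nu>1 \<nu>2 \<nu>3 (ntilde d n)\<bar> \<le> k11
      \<and> \<bar>l12 \<nu>2 (ntilde d n) / lden \<nu> \<nu>1 \<nu>2 \<nu>3 (ntilde d n)\<bar> \<le> k12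
      \<and> \<bar>l21 \<nu>3 (ntilde d n) / lden \<nu> \<nu>1 \<nu>2 \<nu>3 (ntilde d n)\<bar> \<le> k21
      \<and> \<bar>l22 \<nu>2 (ntilde d n) / lden \<nu> \<nu>1 \<nu>2 \<nu>3 (ntilde d n)\<bar> \<le> k22"
  shows "linv d \<nu> \<nu>1 \<nu>2 \<nu>3 X \<in> l2e"
    and "l2norm (fst (linv d \<nu> \<nu>1 \<nu>2 \<nu>3 X)) \<le> k22 * l2norm (fst X) + k12 * l2norm (snd X)"
    and "l2norm (snd (linv d \<nu> \<nu>1 \<nu>2 \<nu>3 X)) \<le> k21 * l2norm (fst X) + k11 * l2norm (snd X)"
proof -
  have X12: "fst X \<in> l2" "snd X \<in> l2"
    using X by (simp_all add: l2e_def)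
  have fst: "fst (linv d \<nu> \<nu>1 \<nu>2 \<nu>3 X) \<in> l2
      \<and> l2norm (fst (linv d \<nu> \<nu>1 \<nu>2 \<nu>3 X)) \<le> k22 * l2norm (fst X) + k12 * l2norm (snd X)"
    unfolding fst_linv using coeff
    by (intro conjI l2_lin_comb[OF X12 \<open>0 \<le> k22\<close> \<open>0 \<le> k12\<close>])
       (auto simp del: of_real_divide of_real_minus simp: norm_of_real)
  have snd: "snd (linv d \<nu> \<nu>1 \<nu>2 \<nu>3 X) \<in> l2
      \<and> l2norm (snd (linv d \<nu> \<nu>1 \<nu>2 \<nu>3 X)) \<le> k21 * l2norm (fst X) + k11 * l2norm (snd X)"
    unfolding snd_linv using coeff
    by (intro conjI l2_lin_comb[OF X12 \<open>0 \<le> k21\<close> \<open>0 \<le> k11\<close>])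
       (auto simp del: of_real_divide of_real_minus simp: norm_of_real)
  show "linv d \<nu> \<nu>1 \<nu>2 \<nu>3 X \<in> l2e"
    using fst snd by (simp add: l2e_def)
  show "l2norm (fst (linv d \<nu> \<nu>1 \<nu>2 \<nu>3 X)) \<le> k22 * l2norm (fst X) + k12 * l2norm (snd X)"
    using fst by simp
  show "l2norm (snd (linv d \<nu> \<nu>1 \<nu>2 \<nu>3 X)) \<le> k21 * l2norm (fst X) + k11 * l2norm (snd X)"
    using snd by simp
qed

lemma PPi_le_linv: "PPi_le M (linv d \<nu> \<nu>1 \<nu>2 \<nu>3 X) = linv d \<nu> \<nu>1 \<nu>2 \<nu>3 (PPi_le M X)"
  and PPi_gt_linv: "PPi_gt M (linv d \<nu> \<nu>1 \<nu>2 \<nu>3 X) = linv d \<nu> \<nu>1 \<nu>2 \<nu>3 (PPi_gt M X)"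
  by (auto simp: PPi_le_def PPi_gt_def Pi_le_def Pi_gt_def linv_def Let_def fun_eq_iff)

lemma linv_add: "linv d \<nu> \<nu>1 \<nu>2 \<nu>3 (X + Y) = linv d \<nu> \<nu>1 \<nu>2 \<nu>3 X + linv d \<nu> \<nu>1 \<nu>2 \<nu>3 Y"
  by (rule prod_eqI)
     (simp_all del: of_real_divide of_real_minus add: fst_linv snd_linv fun_eq_iff algebra_simps)

lemma linv_psmult: "linv d \<nu> \<nu>1 \<nu>2 \<nu>3 (psmult c X) = psmult c (linv d \<nu> \<nu>1 \<nu>2 \<nu>3 X)"
  by (simp add: linv_def psmult_def Let_def fun_eq_iff algebra_simps)

lemma l2e_bounded_linv:
  assumes "0 < \<nu>" and "\<forall>\<xi>. lden \<nu> \<nu>1 \<nu>2 \<nu>3 \<xi> \<noteq> 0"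
  shows "l2e_bounded (linv d \<nu> \<nu>1 \<nu>2 \<nu>3)"
proof -
  obtain C where "0 \<le> C"
    and C: "\<And>\<xi>. \<bar>l11 \<nu> \<nu>1 \<xi> / lden \<nu> \<nu>1 \<nu>2 \<nu>3 \<xi>\<bar> \<le> C \<and> \<bar>l12 \<nu>2 \<xi> / lden \<nu> \<nu>1 \<nu>2 \<nu>3 \<xi>\<bar> \<le> C
      \<and> \<bar>l21 \<nu>3 \<xi> / lden \<nu> \<nu>1 \<nu>2 \<nu>3 \<xi>\<bar> \<le> C \<and> \<bar>l22 \<nu>2 \<xi> / lden \<nu> \<nu>1 \<nu>2 \<nu>3 \<xi>\<bar> \<le> C"
    using l_entries_over_lden_bounded[OF assms] by blast
  show ?thesis
  proof (rule l2e_boundedI)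
    fix X assume X: "X \<in> l2e"
    note L = linv_bounds[where d = d, OF X \<open>0 \<le> C\<close> \<open>0 \<le> C\<close> \<open>0 \<le> C\<close> \<open>0 \<le> C\<close> C]
    show "linv d \<nu> \<nu>1 \<nu>2 \<nu>3 X \<in> l2e"
      by (rule L(1))
    have "l2e_norm (linv d \<nu> \<nu>1 \<nu>2 \<nu>3 X)
        \<le> l2norm (fst (linv d \<nu> \<nu>1 \<nu>2 \<nu>3 X)) + l2norm (snd (linv d \<nu> \<nu>1 \<nu>2 \<nu>3 X))"
      by (rule l2e_norm_le_l2norm_add[OF L(1)])
    also have "\<dots> \<le> (4 * C) * l2e_norm X"
      using L(2,3) mult_left_mono[OF l2norm_fst_le_l2e_norm \<open>0 \<le> C\<close>, of X]
        mult_left_mono[OF l2norm_snd_le_l2e_norm \<open>0 \<le> C\<close>, of X]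
      by linarith
    finally show "l2e_norm (linv d \<nu> \<nu>1 \<nu>2 \<nu>3 X) \<le> (4 * C) * l2e_norm X" .
  qed
qed

section \<open>The operators Dg^N, A and B\<close>

locale finite_modes =
  fixes N :: nat and V1 V2 :: seq
  assumes V1_vanishes: "\<forall>n>N. V1 n = 0" and V2_vanishes: "\<forall>n>N. V2 n = 0"
begin

lemma DgN_add: "DgN V1 V2 (X + Y) = DgN V1 V2 X + DgN V1 V2 Y"
  by (simp add: DgN_def conv_add[OF V1_vanishes] conv_add[OF V2_vanishes] fun_eq_iff algebra_simps)

lemma DgN_psmult: "DgN V1 V2 (psmult c X) = psmult c (DgN V1 V2 X)"
  by (simp add: DgN_def psmult_def conv_scale[OF V1_vanishes] conv_scale[OF V2_vanishes]
      fun_eq_iff algebra_simps)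

lemma Aop_add:
  "Aop d \<nu> \<nu>1 \<nu>2 \<nu>3 V1 V2 (X + Y) = Aop d \<nu> \<nu>1 \<nu>2 \<nu>3 V1 V2 X + Aop d \<nu> \<nu>1 \<nu>2 \<nu>3 V1 V2 Y"
  by (simp add: Aop_def linv_add DgN_add algebra_simps)

lemma Aop_psmult: "Aop d \<nu> \<nu>1 \<nu>2 \<nu>3 V1 V2 (psmult c X) = psmult c (Aop d \<nu> \<nu>1 \<nu>2 \<nu>3 V1 V2 X)"
  by (simp add: Aop_def linv_psmult DgN_psmult psmult_add)

text \<open>Both rows of Dg^N are plus or minus the same sequence, whence the factor sqrt 2.\<close>

lemma DgN_l2e:
  assumes "W \<in> l2e"
  shows "DgN V1 V2 W \<in> l2e"
    and l2e_norm_DgN_le: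
      "l2e_norm (DgN V1 V2 W) \<le> sqrt 2 * (l1norm V1 * l2norm (fst W) + l1norm V2 * l2norm (snd W))"
proof -
  have W: "fst W \<in> l2" "snd W \<in> l2"
    using assms by (simp_all add: l2e_def)
  define c where "c = conv V1 (fst W) + conv V2 (snd W)"
  have DgN_eq: "DgN V1 V2 W = (c, - c)"
    by (simp add: DgN_def c_def fun_eq_iff)
  have c: "c \<in> l2"
    unfolding c_def using conv_l2(1)[OF V1_vanishes W(1)] conv_l2(1)[OF V2_vanishes W(2)]
    by (rule l2_add(1))
  have "l2norm c \<le> l1norm V1 * l2norm (fst W) + l1norm V2 * l2norm (snd W)"
    unfolding c_def
    using l2_add(2)[OF conv_l2(1)[OF V1_vanishes W(1)] conv_l2(1)[OF V2_vanishes W(2)]]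
      conv_l2(2)[OF V1_vanishes W(1)] conv_l2(2)[OF V2_vanishes W(2)]
    by linarith
  moreover have "l2e_norm (DgN V1 V2 W) = sqrt 2 * l2norm c"
    using l2norm_nonneg[OF c]
    by (simp add: DgN_eq l2e_norm_def l2norm_uminus real_sqrt_mult flip: mult_2)
  ultimately show
    "l2e_norm (DgN V1 V2 W) \<le> sqrt 2 * (l1norm V1 * l2norm (fst W) + l1norm V2 * l2norm (snd W))"
    by simp
  show "DgN V1 V2 W \<in> l2e"
    using c by (simp add: DgN_eq l2e_def l2_uminus)
qed

lemma l2e_bounded_DgN: "l2e_bounded (DgN V1 V2)"
proof (rule l2e_boundedI)
  fix W assume W: "W \<in> l2e"
  then show "DgN V1 V2 W \<in> l2e"
    by (rule DgN_l2e)
  have "l1norm V1 * l2norm (fst W) + l1norm V2 * l2norm (snd W)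
      \<le> (l1norm V1 + l1norm V2) * l2e_norm W"
    using l1norm_nonneg[OF V1_vanishes] l1norm_nonneg[OF V2_vanishes]
      l2norm_fst_le_l2e_norm[of W] l2norm_snd_le_l2e_norm[of W]
    by (simp add: distrib_right add_mono mult_left_mono)
  then have "sqrt 2 * (l1norm V1 * l2norm (fst W) + l1norm V2 * l2norm (snd W))
      \<le> sqrt 2 * ((l1norm V1 + l1norm V2) * l2e_norm W)"
    by (rule mult_left_mono) simp
  with l2e_norm_DgN_le[OF W]
  have "l2e_norm (DgN V1 V2 W) \<le> sqrt 2 * ((l1norm V1 + l1norm V2) * l2e_norm W)"
    by (rule order_trans)
  then show "l2e_norm (DgN V1 V2 W) \<le> (sqrt 2 * (l1norm V1 + l1norm V2)) * l2e_norm W"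
    by (simp add: mult.assoc)
qed

lemma PPi_le_DgN:
  assumes "PPi_le M W = W"
  shows "PPi_le (M + N) (DgN V1 V2 W) = DgN V1 V2 W"
proof -
  have "\<forall>m>M. fst W m = 0" and "\<forall>m>M. snd W m = 0"
    using assms by (simp_all add: PPi_le_eq_self_iff)
  then show ?thesis
    using conv_eq_zero_high[OF V1_vanishes] conv_eq_zero_high[OF V2_vanishes]
    by (simp add: PPi_le_eq_self_iff DgN_def)
qed

lemma PPi_gt_DgN:
  assumes "PPi_gt (M + N) W = W"
  shows "PPi_gt M (DgN V1 V2 W) = DgN V1 V2 W"
proof -
  have "\<forall>m\<le>M + N. fst W m = 0" and "\<forall>m\<le>M + N. snd W m = 0"
    using assms by (simp_all add: PPi_gt_eq_self_iff)
  then show ?thesis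
    using conv_eq_zero_low[OF V1_vanishes] conv_eq_zero_low[OF V2_vanishes]
    by (simp add: PPi_gt_eq_self_iff DgN_def)
qed

end

locale block_operator =
  fixes N :: nat and BN :: "seqpair \<Rightarrow> seqpair"
  assumes BN_maps: "X \<in> l2e \<Longrightarrow> BN X \<in> l2e"
    and BN_add: "X \<in> l2e \<Longrightarrow> Y \<in> l2e \<Longrightarrow> BN (X + Y) = BN X + BN Y"
    and BN_psmult: "X \<in> l2e \<Longrightarrow> BN (psmult c X) = psmult c (BN X)"
    and BN_bounded: "\<exists>K. \<forall>X\<in>l2e. l2e_norm (BN X) \<le> K * l2e_norm X"
    and BN_block: "X \<in> l2e \<Longrightarrow> BN X = PPi_le N (BN (PPi_le N X))"
begin

lemma BN_zero: "BN 0 = 0"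
  using BN_psmult[OF l2e_zero, of 0] by (simp add: psmult_zero)

lemma l2e_bounded_Bop: "l2e_bounded (Bop N BN)"
proof -
  have "l2e_bounded BN"
    using BN_maps BN_bounded by (simp add: l2e_bounded_def)
  then have "l2e_bounded (\<lambda>X. PPi_gt N X + BN X)"
    by (rule l2e_bounded_add[OF l2e_bounded_PPi_gt])
  then show ?thesis
    by (simp add: Bop_def[abs_def])
qed

lemma Bop_add: "X \<in> l2e \<Longrightarrow> Y \<in> l2e \<Longrightarrow> Bop N BN (X + Y) = Bop N BN X + Bop N BN Y"
  by (simp add: Bop_def PPi_gt_add BN_add algebra_simps)

lemma Bop_psmult: "X \<in> l2e \<Longrightarrow> Bop N BN (psmult c X) = psmult c (Bop N BN X)"
  by (simp add: Bop_def PPi_gt_psmult BN_psmult psmult_add)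

lemma Bop_eq_self:
  assumes "X \<in> l2e" and "PPi_gt N X = X"
  shows "Bop N BN X = X"
proof -
  have "\<forall>n\<le>N. fst X n = 0 \<and> snd X n = 0"
    using assms(2) PPi_gt_eq_self_iff[of N X] by blast
  then have "PPi_le N X = 0"
    by (auto simp: PPi_le_def Pi_le_def fun_eq_iff prod_eq_iff)
  then have "BN X = PPi_le N (BN 0)"
    using BN_block[OF assms(1)] by simp
  also have "\<dots> = 0"
    by (simp add: BN_zero PPi_le_def Pi_le_def fun_eq_iff prod_eq_iff)
  finally have "BN X = 0" .
  then show ?thesis
    using assms(2) by (simp add: Bop_def)
qed

lemma PPi_le_Bop:
  assumes "X \<in> l2e" and "N \<le> M" and "PPi_le M X = X"
  shows "PPi_le M (Bop N BN X) = Bop N BN X"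
proof -
  have "PPi_le M (BN X) = BN X"
    using BN_block[OF assms(1)] assms(2) by (metis PPi_le_PPi_le min.absorb2)
  then show ?thesis
    using assms(3) by (simp add: Bop_def PPi_le_add PPi_le_PPi_gt)
qed

end

section \<open>The Z1 estimate\<close>

lemma sum3_mult_le_sqrt:
  fixes a b c x y z :: real
  shows "a * x + b * y + c * z \<le> sqrt (a\<^sup>2 + b\<^sup>2 + c\<^sup>2) * sqrt (x\<^sup>2 + y\<^sup>2 + z\<^sup>2)"
  using norm_cauchy_schwarz[of "(a, b, c)" "(x, y, z)"] by (simp add: norm_Pair add.assoc)

locale Z1_setting = finite_modes N V1 V2 + block_operator N BN
  for N :: nat and V1 V2 :: seq and BN :: "seqpair \<Rightarrow> seqpair" +
  fixes d \<nu> \<nu>1 \<nu>2 \<nu>3 :: real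
  assumes nu_pos: "0 < \<nu>" and lden_nonzero: "\<forall>\<xi>. lden \<nu> \<nu>1 \<nu>2 \<nu>3 \<xi> \<noteq> 0"
begin

abbreviation A :: "seqpair \<Rightarrow> seqpair" where
  "A \<equiv> Aop d \<nu> \<nu>1 \<nu>2 \<nu>3 V1 V2"

abbreviation head_residual :: "seqpair \<Rightarrow> seqpair" where
  "head_residual \<equiv> \<lambda>U. PPi_le (2*N) U - PPi_le (3*N) (Bop N BN (A (PPi_le (2*N) U)))"

abbreviation lratio :: "(real \<Rightarrow> real) \<Rightarrow> real \<Rightarrow> real" where
  "lratio f \<equiv> \<lambda>\<xi>. f \<xi> / lden \<nu> \<nu>1 \<nu>2 \<nu>3 \<xi>"

abbreviation tail_sup :: "(real \<Rightarrow> real) \<Rightarrow> real" where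
  "tail_sup f \<equiv> supgt d (2*N) (lratio f)"

abbreviation Z1_1 :: real where
  "Z1_1 \<equiv> tail_sup (l22 \<nu>2) * l1norm V1 + tail_sup (l21 \<nu>3) * l1norm V2"

abbreviation Z1_2 :: real where
  "Z1_2 \<equiv> tail_sup (l12 \<nu>2) * l1norm V1 + tail_sup (l11 \<nu> \<nu>1) * l1norm V2"

lemma l2e_bounded_A: "l2e_bounded A"
proof -
  have "l2e_bounded (\<lambda>X. DgN V1 V2 (linv d \<nu> \<nu>1 \<nu>2 \<nu>3 X))"
    by (rule l2e_bounded_comp[OF l2e_bounded_DgN l2e_bounded_linv[OF nu_pos lden_nonzero]])
  then have "l2e_bounded (\<lambda>X. X + DgN V1 V2 (linv d \<nu> \<nu>1 \<nu>2 \<nu>3 X))"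
    by (rule l2e_bounded_add[OF l2e_bounded_id])
  then show ?thesis
    by (simp add: Aop_def[abs_def])
qed

lemma l2e_bounded_head_residual: "l2e_bounded head_residual"
proof -
  have "l2e_bounded (\<lambda>U. A (PPi_le (2*N) U))"
    by (rule l2e_bounded_comp[OF l2e_bounded_A l2e_bounded_PPi_le])
  then have "l2e_bounded (\<lambda>U. Bop N BN (A (PPi_le (2*N) U)))"
    by (rule l2e_bounded_comp[OF l2e_bounded_Bop])
  then have "l2e_bounded (\<lambda>U. PPi_le (3*N) (Bop N BN (A (PPi_le (2*N) U))))"
    by (rule l2e_bounded_comp[OF l2e_bounded_PPi_le])
  then show ?thesis
    by (rule l2e_bounded_diff[OF l2e_bounded_PPi_le])
qed

lemma head_residual_psmult:
  assumes "X \<in> l2e"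
  shows "head_residual (psmult c X) = psmult c (head_residual X)"
proof -
  have "A (PPi_le (2*N) X) \<in> l2e"
    using assms by (simp add: l2e_bounded_maps[OF l2e_bounded_A] l2e_PPi_le)
  then show ?thesis
    by (simp add: PPi_le_psmult Aop_psmult Bop_psmult psmult_diff)
qed

lemma head_residual_le:
  assumes "U \<in> l2e"
  shows "l2e_norm (head_residual U) \<le> opnorm head_residual * l2e_norm (PPi_le (2*N) U)"
proof -
  have "head_residual U = head_residual (PPi_le (2*N) U)"
    by (simp add: PPi_le_PPi_le)
  then show ?thesis
    using l2e_norm_le_opnorm[OF l2e_bounded_head_residual head_residual_psmult l2e_PPi_le(1)[OF assms]]
    by simp
qed

lemma Bop_A_tail:
  assumes "U \<in> l2e"
  shows "Bop N BN (A (PPi_gt (2*N) U)) = A (PPi_gt (2*N) U)"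
proof -
  define T where "T = PPi_gt (2*N) U"
  have "PPi_gt (N + N) (linv d \<nu> \<nu>1 \<nu>2 \<nu>3 T) = linv d \<nu> \<nu>1 \<nu>2 \<nu>3 T"
    by (simp add: T_def PPi_gt_linv PPi_gt_PPi_gt mult_2)
  then have "PPi_gt N (DgN V1 V2 (linv d \<nu> \<nu>1 \<nu>2 \<nu>3 T)) = DgN V1 V2 (linv d \<nu> \<nu>1 \<nu>2 \<nu>3 T)"
    by (rule PPi_gt_DgN)
  moreover have "PPi_gt N T = T"
    by (simp add: T_def PPi_gt_PPi_gt max_def)
  ultimately have high: "PPi_gt N (A T) = A T"
    by (simp add: Aop_def PPi_gt_add)
  have "A T \<in> l2e"
    using assms by (simp add: T_def l2e_PPi_gt l2e_bounded_maps[OF l2e_bounded_A])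
  then show ?thesis
    unfolding T_def[symmetric] using high by (rule Bop_eq_self)
qed

lemma PPi_le_Bop_A_head:
  assumes "U \<in> l2e"
  shows "PPi_le (3*N) (Bop N BN (A (PPi_le (2*N) U))) = Bop N BN (A (PPi_le (2*N) U))"
proof -
  define H where "H = PPi_le (2*N) U"
  have "PPi_le (2*N) (linv d \<nu> \<nu>1 \<nu>2 \<nu>3 H) = linv d \<nu> \<nu>1 \<nu>2 \<nu>3 H"
    by (simp add: H_def PPi_le_linv PPi_le_PPi_le)
  then have "PPi_le (2*N + N) (DgN V1 V2 (linv d \<nu> \<nu>1 \<nu>2 \<nu>3 H)) = DgN V1 V2 (linv d \<nu> \<nu>1 \<nu>2 \<nu>3 H)"
    by (rule PPi_le_DgN)
  moreover have "PPi_le (3*N) H = H" and "2*N + N = 3*N"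
    by (simp_all add: H_def PPi_le_PPi_le min_def)
  ultimately have low: "PPi_le (3*N) (A H) = A H"
    by (simp add: Aop_def PPi_le_add)
  have "A H \<in> l2e"
    using assms by (simp add: H_def l2e_PPi_le l2e_bounded_maps[OF l2e_bounded_A])
  then show ?thesis
    unfolding H_def[symmetric] using low by (intro PPi_le_Bop) simp_all
qed

lemma residual_decomposition:
  assumes "U \<in> l2e"
  shows "U - Bop N BN (A U) = head_residual U - DgN V1 V2 (linv d \<nu> \<nu>1 \<nu>2 \<nu>3 (PPi_gt (2*N) U))"
proof -
  define H where "H = PPi_le (2*N) U"
  define T where "T = PPi_gt (2*N) U"
  define D where "D = DgN V1 V2 (linv d \<nu> \<nu>1 \<nu>2 \<nu>3 T)"
  have "A H \<in> l2e" and "A T \<in> l2e"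
    using assms by (simp_all add: H_def T_def l2e_PPi_le l2e_PPi_gt l2e_bounded_maps[OF l2e_bounded_A])
  have "U = H + T"
    by (simp add: H_def T_def PPi_le_add_PPi_gt)
  then have "Bop N BN (A U) = Bop N BN (A H) + Bop N BN (A T)"
    using Bop_add[OF \<open>A H \<in> l2e\<close> \<open>A T \<in> l2e\<close>] by (simp add: Aop_add)
  also have "\<dots> = Bop N BN (A H) + (T + D)"
    unfolding Bop_A_tail[OF assms, folded T_def] by (simp add: Aop_def D_def)
  finally have "U - Bop N BN (A U) = (H + T) - (Bop N BN (A H) + (T + D))"
    using \<open>U = H + T\<close> by simp
  also have "\<dots> = (H - PPi_le (3*N) (Bop N BN (A H))) - D"
    unfolding PPi_le_Bop_A_head[OF assms, folded H_def] by (simp add: algebra_simps)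
  finally show ?thesis
    by (simp add: H_def T_def D_def)
qed

lemma lratio_le_tail_sup:
  assumes "2*N < n"
  shows "\<bar>lratio (l11 \<nu> \<nu>1) (ntilde d n)\<bar> \<le> tail_sup (l11 \<nu> \<nu>1)
    \<and> \<bar>lratio (l12 \<nu>2) (ntilde d n)\<bar> \<le> tail_sup (l12 \<nu>2)
    \<and> \<bar>lratio (l21 \<nu>3) (ntilde d n)\<bar> \<le> tail_sup (l21 \<nu>3)
    \<and> \<bar>lratio (l22 \<nu>2) (ntilde d n)\<bar> \<le> tail_sup (l22 \<nu>2)"
proof -
  obtain C where C: "\<And>\<xi>. \<bar>lratio (l11 \<nu> \<nu>1) \<xi>\<bar> \<le> C \<and> \<bar>lratio (l12 \<nu>2) \<xi>\<bar> \<le> C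
    \<and> \<bar>lratio (l21 \<nu>3) \<xi>\<bar> \<le> C \<and> \<bar>lratio (l22 \<nu>2) \<xi>\<bar> \<le> C"
    using l_entries_over_lden_bounded[OF nu_pos lden_nonzero] by blast
  show ?thesis
    using assms by (intro conjI abs_le_supgt; use C in blast)
qed

lemma tail_sup_nonneg:
  "0 \<le> tail_sup (l11 \<nu> \<nu>1)" "0 \<le> tail_sup (l12 \<nu>2)" "0 \<le> tail_sup (l21 \<nu>3)" "0 \<le> tail_sup (l22 \<nu>2)"
  by (rule order_trans[OF abs_ge_zero], use lratio_le_tail_sup[of "Suc (2*N)"] in blast)+

lemma tail_residual_le:
  assumes "U \<in> l2e"
  shows "l2e_norm (DgN V1 V2 (linv d \<nu> \<nu>1 \<nu>2 \<nu>3 (PPi_gt (2*N) U)))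
    \<le> sqrt 2 * (Z1_1 * l2norm (fst (PPi_gt (2*N) U)) + Z1_2 * l2norm (snd (PPi_gt (2*N) U)))"
proof -
  define T where "T = PPi_gt (2*N) U"
  have "T \<in> l2e"
    unfolding T_def using assms by (rule l2e_PPi_gt)
  have "2*N < n" if "fst T n \<noteq> 0 \<or> snd T n \<noteq> 0" for n
    using that by (auto simp: T_def PPi_gt_def Pi_gt_def split: if_splits)
  note L = linv_bounds[OF \<open>T \<in> l2e\<close> tail_sup_nonneg lratio_le_tail_sup[OF this]]
  have "l2e_norm (DgN V1 V2 (linv d \<nu> \<nu>1 \<nu>2 \<nu>3 T))
      \<le> sqrt 2 * (l1norm V1 * l2norm (fst (linv d \<nu> \<nu>1 \<nu>2 \<nu>3 T))
                 + l1norm V2 * l2norm (snd (linv d \<nu> \<nu>1 \<nu>2 \<nu>3 T)))"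
    by (rule l2e_norm_DgN_le[OF L(1)])
  also have "\<dots> \<le> sqrt 2 * (l1norm V1 * (tail_sup (l22 \<nu>2) * l2norm (fst T) + tail_sup (l12 \<nu>2) * l2norm (snd T))
                 + l1norm V2 * (tail_sup (l21 \<nu>3) * l2norm (fst T) + tail_sup (l11 \<nu> \<nu>1) * l2norm (snd T)))"
    using L(2,3) l1norm_nonneg[OF V1_vanishes] l1norm_nonneg[OF V2_vanishes]
    by (intro mult_left_mono add_mono) simp_all
  also have "\<dots> = sqrt 2 * (Z1_1 * l2norm (fst T) + Z1_2 * l2norm (snd T))"
    by (simp add: algebra_simps)
  finally show ?thesis
    unfolding T_def .
qed

lemma residual_le:
  assumes "U \<in> l2e" and "l2e_norm U \<le> 1"
  shows "l2e_norm (U - Bop N BN (A U)) \<le> sqrt ((opnorm head_residual)\<^sup>2 + 2 * Z1_1\<^sup>2 + 2 * Z1_2\<^sup>2)"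
proof -
  define h where "h = l2e_norm (PPi_le (2*N) U)"
  define t1 where "t1 = l2norm (fst (PPi_gt (2*N) U))"
  define t2 where "t2 = l2norm (snd (PPi_gt (2*N) U))"
  have "PPi_gt (2*N) U \<in> l2e"
    using assms(1) by (rule l2e_PPi_gt)
  then have tail: "DgN V1 V2 (linv d \<nu> \<nu>1 \<nu>2 \<nu>3 (PPi_gt (2*N) U)) \<in> l2e"
    by (intro DgN_l2e l2e_bounded_maps[OF l2e_bounded_linv[OF nu_pos lden_nonzero]])
  have head: "head_residual U \<in> l2e"
    using l2e_bounded_maps[OF l2e_bounded_head_residual assms(1)] by simp
  have "l2e_norm (U - Bop N BN (A U))
      \<le> l2e_norm (head_residual U) + l2e_norm (DgN V1 V2 (linv d \<nu> \<nu>1 \<nu>2 \<nu>3 (PPi_gt (2*N) U)))"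
    unfolding residual_decomposition[OF assms(1)] by (rule l2e_diff(2)[OF head tail])
  also have "\<dots> \<le> opnorm head_residual * h + sqrt 2 * (Z1_1 * t1 + Z1_2 * t2)"
    unfolding h_def t1_def t2_def
    using head_residual_le[OF assms(1)] tail_residual_le[OF assms(1)] by (rule add_mono)
  also have "\<dots> = opnorm head_residual * h + (sqrt 2 * Z1_1) * t1 + (sqrt 2 * Z1_2) * t2"
    by (simp add: algebra_simps)
  also have "\<dots> \<le> sqrt ((opnorm head_residual)\<^sup>2 + (sqrt 2 * Z1_1)\<^sup>2 + (sqrt 2 * Z1_2)\<^sup>2)
      * sqrt (h\<^sup>2 + t1\<^sup>2 + t2\<^sup>2)"
    by (rule sum3_mult_le_sqrt)
  also have "\<dots> \<le> sqrt ((opnorm head_residual)\<^sup>2 + 2 * Z1_1\<^sup>2 + 2 * Z1_2\<^sup>2)"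
  proof -
    have "h\<^sup>2 + t1\<^sup>2 + t2\<^sup>2 \<le> 1"
      using l2e_norm_split[OF assms(1), of "2*N"] assms(2) l2e_norm_nonneg[of U]
      by (simp add: h_def t1_def t2_def power_le_one)
    then have "sqrt (h\<^sup>2 + t1\<^sup>2 + t2\<^sup>2) \<le> 1"
      by simp
    then show ?thesis
      by (simp add: power_mult_distrib mult_left_le)
  qed
  finally show ?thesis .
qed

lemma opnorm_residual_le:
  "opnorm (\<lambda>U. U - Bop N BN (A U)) \<le> sqrt ((opnorm head_residual)\<^sup>2 + 2 * Z1_1\<^sup>2 + 2 * Z1_2\<^sup>2)"
  by (rule opnorm_le) (rule residual_le)

end

theorem lemma4p5:
  fixes \<nu> \<nu>1 \<nu>2 \<nu>3 \<nu>4 \<nu>5 d :: real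
    and N0 N :: nat
    and Ubar :: seqpair
    and BN :: "seqpair \<Rightarrow> seqpair"
  assumes nu_pos: "\<nu> > 0"
    and l_inv: "\<forall>\<xi>::real. lden \<nu> \<nu>1 \<nu>2 \<nu>3 \<xi> \<noteq> 0"
    and d_ge: "d \<ge> 1"
    and Ubar_l2: "Ubar \<in> l2e"
    and Ubar_proj: "Ubar = PPi_le N0 Ubar"
    and BN_maps: "\<forall>UU\<in>l2e. BN UU \<in> l2e"
    and BN_add: "\<forall>UU\<in>l2e. \<forall>VV\<in>l2e. BN (padd UU VV) = padd (BN UU) (BN VV)"
    and BN_smult: "\<forall>c. \<forall>UU\<in>l2e. BN (psmult c UU) = psmult c (BN UU)"
    and BN_bdd: "\<exists>C. \<forall>UU\<in>l2e. l2e_norm (BN UU) \<le> C * l2e_norm UU"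
    and BN_proj: "\<forall>UU\<in>l2e. BN UU = PPi_le N (BN (PPi_le N UU))"
  defines "Z0 \<equiv> opnorm (\<lambda>UU. pdiff (PPi_le (2*N) UU)
                (PPi_le (3*N) (Bop N BN (Aop d \<nu> \<nu>1 \<nu>2 \<nu>3 (VN1 d N \<nu>4 \<nu>5 Ubar) (VN2 d N \<nu>5 Ubar)
                   (PPi_le (2*N) UU)))))"
    and "Z11 \<equiv> supgt d (2*N) (\<lambda>\<xi>. l22 \<nu>2 \<xi> / lden \<nu> \<nu>1 \<nu>2 \<nu>3 \<xi>) * l1norm (VN1 d N \<nu>4 \<nu>5 Ubar)
             + supgt d (2*N) (\<lambda>\<xi>. l21 \<nu>3 \<xi> / lden \<nu> \<nu>1 \<nu>2 \<nu>3 \<xi>) * l1norm (VN2 d N \<nu>5 Ubar)"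
    and "Z12 \<equiv> supgt d (2*N) (\<lambda>\<xi>. l12 \<nu>2 \<xi> / lden \<nu> \<nu>1 \<nu>2 \<nu>3 \<xi>) * l1norm (VN1 d N \<nu>4 \<nu>5 Ubar)
             + supgt d (2*N) (\<lambda>\<xi>. l11 \<nu> \<nu>1 \<xi> / lden \<nu> \<nu>1 \<nu>2 \<nu>3 \<xi>) * l1norm (VN2 d N \<nu>5 Ubar)"
  shows "opnorm (\<lambda>UU. pdiff UU (Bop N BN (Aop d \<nu> \<nu>1 \<nu>2 \<nu>3 (VN1 d N \<nu>4 \<nu>5 Ubar) (VN2 d N \<nu>5 Ubar) UU)))
           \<le> sqrt (Z0\<^sup>2 + 2 * Z11\<^sup>2 + 2 * Z12\<^sup>2)"
proof -
  interpret Z1_setting N "VN1 d N \<nu>4 \<nu>5 Ubar" "VN2 d N \<nu>5 Ubar" BN d \<nu> \<nu>1 \<nu>2 \<nu>3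
    by unfold_locales
      (use nu_pos l_inv BN_maps BN_add BN_smult BN_bdd BN_proj in
        \<open>auto simp: VN1_def VN2_def Pi_le_def\<close>)
  show ?thesis
    using opnorm_residual_le unfolding Z0_def Z11_def Z12_def by simp
qed

end
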